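(* Consider online binary classification with abstention with $d$ experts, and suppose the abstention costs satisfy $0\le c_t$ and $\max_t c_t<\frac12$. Then AdaHedge with abstention guarantees, for every expert $i\in\{1,\dots,d\}$, $$\sum_{t=1}^T\big((1-b_t)\ell_t(y_t^\star)+b_tc_t\big)\le\sum_{t=1}^T\ell_t(y_t^i)+\min\Big\{\frac{\ln d}{1-2\max_tc_t},\ 2\sqrt{\ln d\sum_{t=1}^Tv_t}\Big\}+\frac43\ln d+2,$$ where $v_t=\mathbb E_{i\sim\hat{\mathbf p}_t}\big[(\ell_t(\hat y_t)-\ell_t(y_t^i))^2\big]$.
   Context: Online classification with abstention: in each round $t=1,\dots,T$, the learner observes expert predictions $y_t^1,\dots,y_t^d\in[-1,1]$, predicts $y'_t\in[-1,1]\cup\{*\}$ ($*$ = abstain), the environment reveals $y_t\in\{-1,1\}$ and an abstention cost $c_t$, and the learner suffers $\ell_t(y'_t)=\frac12(1-y_ty'_t)$ if $y'_t\in[-1,1]$ and $c_t$ if $y'_t=*$. For expert $i$ its loss is $\ell_t(y_t^i)=\frac12(1-y_ty_t^i)\in[0,1]$. AdaHedge: with $L_{t,i}=\sum_{s<t}\ell_s(y_s^i)$, weights $\hat p_{t,i}\propto\exp(-\eta_tL_{t,i})$, where $\eta_t=\ln d/\Delta_{t-1}$ (and for $\Delta_{t-1}=0$ the weights are uniform over the experts minimizing $L_{t,i}$), $\Delta_t=\sum_{s\le t}\delta_s$, $\delta_s=h_s-m_s$, $h_s=\sum_i\hat p_{s,i}\ell_s(y_s^i)$, $m_s=-\frac1{\eta_s}\ln\sum_i\hat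 p_{s,i}e^{-\eta_s\ell_s(y_s^i)}$ (with $m_s=\min_{i:\hat p_{s,i}>0}\ell_s(y_s^i)$ when $\eta_s=\infty$). AdaHedge with abstention (Algorithm 2): in round $t$ obtain $\hat{\mathbf p}_t$ from AdaHedge, set $\hat y_t=\sum_i\hat p_{t,i}y_t^i$, $y_t^\star=\mathrm{sign}(\hat y_t)$, $b_t=1-|\hat y_t|$; predict $y'_t=y_t^\star$ with probability $1-b_t$ and abstain with probability $b_t$; then feed the expert losses $\ell_t(y_t^i)$ to AdaHedge. The quantity $(1-b_t)\ell_t(y_t^\star)+b_tc_t$ is the learner's expected loss in round $t$. *)

theory Defs
  imports Complex_Main
begin

text \<open>Rounds are indexed t = 0,...,T-1 (paper: 1..T); experts i = 0,...,d-1 (paper: 1..d).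
  y t : revealed label, ex t i : prediction of expert i in round t, c t : abstention cost.\<close>

definition loss :: "real \<Rightarrow> real \<Rightarrow> real" where
  "loss yt p = (1 - yt * p) / 2"

definition cumloss :: "(nat \<Rightarrow> real) \<Rightarrow> (nat \<Rightarrow> nat \<Rightarrow> real) \<Rightarrow> nat \<Rightarrow> nat \<Rightarrow> real" where
  "cumloss y ex t i = (\<Sum>s<t. loss (y s) (ex s i))"

text \<open>AdaHedge weights in round t, given the current value D of the cumulative mixability gap
  (eta = ln d / D; D = 0 means eta = infinity: uniform over the leaders).\<close>
definition ah_weights :: "nat \<Rightarrow> (nat \<Rightarrow> real) \<Rightarrow> (nat \<Rightarrow> nat \<Rightarrow> real) \<Rightarrow> real \<Rightarrow> nat \<Rightarrow> nat \<Rightarrow> real" where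
  "ah_weights d y ex D t i =
    (if D = 0 then
       (let M = {j \<in> {..<d}. cumloss y ex t j = Min (cumloss y ex t ` {..<d})}
        in if i \<in> M then 1 / real (card M) else 0)
     else
       (let eta = ln (real d) / D
        in if i < d then exp (- eta * cumloss y ex t i) / (\<Sum>j<d. exp (- eta * cumloss y ex t j))
           else 0))"

definition ah_gap :: "nat \<Rightarrow> (nat \<Rightarrow> real) \<Rightarrow> (nat \<Rightarrow> nat \<Rightarrow> real) \<Rightarrow> real \<Rightarrow> nat \<Rightarrow> real" where
  "ah_gap d y ex D t =
    (let p = ah_weights d y ex D t;
         h = (\<Sum>i<d. p i * loss (y t) (ex t i));
         m = (if D = 0 then Min {loss (y t) (ex t i) | i. i < d \<and> p i > 0}
              else (let eta = ln (real d) / D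
                    in - (1 / eta) * ln (\<Sum>i<d. p i * exp (- eta * loss (y t) (ex t i)))))
     in h - m)"

primrec ah_Delta :: "nat \<Rightarrow> (nat \<Rightarrow> real) \<Rightarrow> (nat \<Rightarrow> nat \<Rightarrow> real) \<Rightarrow> nat \<Rightarrow> real" where
  "ah_Delta d y ex 0 = 0"
| "ah_Delta d y ex (Suc t) = ah_Delta d y ex t + ah_gap d y ex (ah_Delta d y ex t) t"

definition ah_p :: "nat \<Rightarrow> (nat \<Rightarrow> real) \<Rightarrow> (nat \<Rightarrow> nat \<Rightarrow> real) \<Rightarrow> nat \<Rightarrow> nat \<Rightarrow> real" where
  "ah_p d y ex t i = ah_weights d y ex (ah_Delta d y ex t) t i"

definition yhat :: "nat \<Rightarrow> (nat \<Rightarrow> real) \<Rightarrow> (nat \<Rightarrow> nat \<Rightarrow> real) \<Rightarrow> nat \<Rightarrow> real" where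
  "yhat d y ex t = (\<Sum>i<d. ah_p d y ex t i * ex t i)"

definition ystar :: "nat \<Rightarrow> (nat \<Rightarrow> real) \<Rightarrow> (nat \<Rightarrow> nat \<Rightarrow> real) \<Rightarrow> nat \<Rightarrow> real" where
  "ystar d y ex t = sgn (yhat d y ex t)"

definition abst :: "nat \<Rightarrow> (nat \<Rightarrow> real) \<Rightarrow> (nat \<Rightarrow> nat \<Rightarrow> real) \<Rightarrow> nat \<Rightarrow> real" where
  "abst d y ex t = 1 - \<bar>yhat d y ex t\<bar>"

definition vt :: "nat \<Rightarrow> (nat \<Rightarrow> real) \<Rightarrow> (nat \<Rightarrow> nat \<Rightarrow> real) \<Rightarrow> nat \<Rightarrow> real" where
  "vt d y ex t = (\<Sum>i<d. ah_p d y ex t i * (loss (y t) (yhat d y ex t) - loss (y t) (ex t i))^2)"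

end

theory Submission
  imports Defs "HOL-Analysis.Convex"
begin

text \<open>
  In round t the expected loss of the abstaining learner is \<open>loss(yhat) - b (1/2 - c)\<close>, and
  \<open>loss(yhat)\<close> is the AdaHedge loss \<open>h = \<Sum>\<^sub>i p\<^sub>i loss(y\<^sup>i)\<close> because the loss is affine. As the expert
  losses lie in [0,1] and have mean h, their variance v is at most \<open>h (1 - h) \<le> b/2\<close>.

  For AdaHedge itself, the mix losses telescope against the soft minimum of the cumulative losses
  at learning rate \<open>ln d / \<Delta>\<close>, which only grows with \<open>\<Delta>\<close>; this gives \<open>\<Sum> h \<le> L\<^sub>i + 2 \<Delta>\<^sub>T\<close>.
  A Bernstein bound on each mixability gap, \<open>\<delta> (1 - \<eta>/3) \<le> \<eta> v / 2\<close>, gives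
  \<open>\<Delta>\<^sub>T\<^sup>2 \<le> ln d \<Sum> v + (2/3 ln d + 1) \<Delta>\<^sub>T\<close>, hence \<open>\<Delta>\<^sub>T \<le> sqrt (ln d \<Sum> v) + 2/3 ln d + 1\<close>:
  the second term of the minimum. For the first, with \<open>B = \<Sum> b\<close>, AM-GM gives
  \<open>2 sqrt (ln d B/2) \<le> ln d / (1 - 2c) + (1/2 - c) B\<close>, and the last summand is paid for by
  the abstention saving \<open>(1/2 - c) B\<close>.
\<close>

section \<open>Elementary inequalities\<close>

lemma pade_denominator_pos: "0 < 6 + 4 * x + (x::real)^2"
proof -
  have "6 + 4 * x + x^2 = (x + 2)^2 + 2"
    by (simp add: power2_eq_square algebra_simps)
  then show ?thesis
    using zero_le_power2[of "x + 2"] by linarith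
qed

lemma has_real_derivative_pade_log_gap:
  fixes z :: real
  assumes "z < 3"
  shows "((\<lambda>x. ln (6 + 4*x + x^2) - ln (6 - 2*x) - x) has_real_derivative
     2 * z^3 / ((6 + 4*z + z^2) * (6 - 2*z))) (at z)"
proof -
  define A where "A = 6 + 4*z + z^2"
  define B where "B = 6 - 2*z"
  have pos: "0 < A" "0 < B"
    using pade_denominator_pos[of z] assms by (simp_all add: A_def B_def)
  have "((\<lambda>x. ln (6 + 4*x + x^2) - ln (6 - 2*x) - x) has_real_derivative
      (4 + 2*z) / A - (-2) / B - 1) (at z)"
    unfolding A_def B_def
    by (rule derivative_eq_intros refl | use pos in \<open>simp_all add: A_def B_def\<close>)+
  moreover have "(4 + 2*z) / A - (-2) / B - 1 = ((4 + 2*z) * B + 2 * A - A * B) / (A * B)"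
    using pos by (simp add: field_simps)
  moreover have "(4 + 2*z) * B + 2 * A - A * B = 2 * z^3"
    unfolding A_def B_def by (simp add: algebra_simps power2_eq_square power3_eq_cube)
  ultimately show ?thesis
    by (simp add: A_def B_def)
qed

lemma exp_le_pade:
  fixes x :: real
  assumes "x < 3"
  shows "exp x \<le> (6 + 4*x + x^2) / (6 - 2*x)"
proof -
  define g where "g x = ln (6 + 4*x + x^2) - ln (6 - 2*x) - x" for x :: real
  define g' where "g' z = 2 * z^3 / ((6 + 4*z + z^2) * (6 - 2*z))" for z :: real
  have deriv: "(g has_real_derivative g' z) (at z)" if "z < 3" for z
    using has_real_derivative_pade_log_gap[OF that] unfolding g_def g'_def .
  have sign: "0 \<le> g' z \<longleftrightarrow> 0 \<le> z" "g' z \<le> 0 \<longleftrightarrow> z \<le> 0" if "z < 3" for z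
  proof -
    have "0 < (6 + 4*z + z^2) * (6 - 2*z)"
      using pade_denominator_pos[of z] that by simp
    then show "0 \<le> g' z \<longleftrightarrow> 0 \<le> z" "g' z \<le> 0 \<longleftrightarrow> z \<le> 0"
      unfolding g'_def
      by (simp_all add: zero_le_divide_iff divide_le_0_iff zero_le_odd_power power_le_zero_eq)
  qed
  have "g 0 \<le> g x"
  proof (cases "0 \<le> x")
    case True
    show ?thesis
    proof (rule DERIV_nonneg_imp_nondecreasing[OF True])
      fix z assume "0 \<le> z" "z \<le> x"
      then show "\<exists>D. (g has_real_derivative D) (at z) \<and> 0 \<le> D"
        using deriv sign(1) assms by (metis order.strict_trans1)
    qed
  next
    case False
    show ?thesis
    proof (rule DERIV_nonpos_imp_nonincreasing[of x 0 g])
      show "x \<le> 0"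
        using False by simp
      fix z assume "x \<le> z" "z \<le> 0"
      then show "\<exists>D. (g has_real_derivative D) (at z) \<and> D \<le> 0"
        using deriv sign(2) by (metis order.strict_trans1 zero_less_numeral)
    qed
  qed
  then have "x \<le> ln ((6 + 4*x + x^2) / (6 - 2*x))"
    using pade_denominator_pos[of x] assms by (simp add: g_def ln_div)
  then show ?thesis
    using pade_denominator_pos[of x] assms by (simp add: ln_ge_iff)
qed

lemma exp_le_quadratic:
  fixes x e :: real
  assumes "x \<le> e" "e < 3"
  shows "exp x \<le> 1 + x + 3 / (6 - 2*e) * x^2"
proof -
  have "exp x \<le> (6 + 4*x + x^2) / (6 - 2*x)"
    using exp_le_pade assms by simp
  also have "\<dots> = 1 + x + 3 / (6 - 2*x) * x^2"
    using assms by (simp add: field_simps) (simp add: algebra_simps power2_eq_square)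
  also have "3 / (6 - 2*x) * x^2 \<le> 3 / (6 - 2*e) * x^2"
    using assms by (intro mult_right_mono divide_left_mono) auto
  finally show ?thesis
    by simp
qed

lemma le_sqrt_add_of_square_le:
  fixes x a b :: real
  assumes "0 \<le> x" "0 \<le> a" "0 \<le> b" "x^2 \<le> a + b * x"
  shows "x \<le> sqrt a + b"
proof (cases "x \<le> b")
  case True
  then show ?thesis
    using real_sqrt_ge_zero[OF assms(2)] by linarith
next
  case False
  have "(x - b)^2 \<le> x * (x - b)"
    using False assms mult_left_mono[of b x b] by (simp add: power2_eq_square algebra_simps)
  also have "\<dots> \<le> a"
    using assms by (simp add: power2_eq_square algebra_simps)
  finally have "x - b \<le> sqrt a"
    using False by (metis real_le_rsqrt)
  then show ?thesis
    by simp
qed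

lemma two_sqrt_mult_le:
  fixes a x k :: real
  assumes "0 \<le> a" "0 \<le> x" "0 < k"
  shows "2 * sqrt (a * x) \<le> a / k + k * x"
proof -
  define u where "u = sqrt (a / k)"
  define w where "w = sqrt (k * x)"
  have "sqrt (a * x) = u * w"
    unfolding u_def w_def using assms by (simp add: real_sqrt_mult[symmetric])
  moreover have "u^2 = a / k" "w^2 = k * x"
    unfolding u_def w_def using assms by auto
  moreover have "0 \<le> (u - w)^2"
    by simp
  ultimately show ?thesis
    by (simp add: power2_eq_square algebra_simps)
qed

lemma mean_minus_Min_bounds:
  fixes l :: "nat \<Rightarrow> real"
  assumes d: "1 \<le> d" and l01: "\<forall>i<d. 0 \<le> l i \<and> l i \<le> 1"
  defines "m \<equiv> Min (l ` {..<d})"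
  shows "0 \<le> (\<Sum>i<d. l i) / real d - m" and "(\<Sum>i<d. l i) / real d - m \<le> 1"
    and "(\<Sum>i<d. l i) / real d = m \<Longrightarrow> \<forall>i<d. l i = m"
proof -
  have m_le: "\<forall>i<d. m \<le> l i"
    unfolding m_def by simp
  have "m \<in> l ` {..<d}"
    unfolding m_def using d by (intro Min_in) (auto simp: lessThan_empty_iff)
  then have "0 \<le> m"
    using l01 by auto
  have "(\<Sum>i<d. m) \<le> (\<Sum>i<d. l i)"
    using m_le by (intro sum_mono) auto
  then show "0 \<le> (\<Sum>i<d. l i) / real d - m"
    using d by (simp add: le_divide_eq mult.commute)
  have "(\<Sum>i<d. l i) \<le> (\<Sum>i<d. 1)"
    using l01 by (intro sum_mono) auto
  then have "(\<Sum>i<d. l i) / real d \<le> 1"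
    using d by (simp add: divide_le_eq)
  then show "(\<Sum>i<d. l i) / real d - m \<le> 1"
    using \<open>0 \<le> m\<close> by linarith
  assume "(\<Sum>i<d. l i) / real d = m"
  then have "(\<Sum>i<d. l i - m) = 0"
    using d by (simp add: sum_subtractf field_simps)
  then show "\<forall>i<d. l i = m"
    using m_le by (subst (asm) sum_nonneg_eq_0_iff) auto
qed

section \<open>Mixability gap and soft minimum\<close>

lemma ln_mgf_centered_bounds:
  fixes p X :: "nat \<Rightarrow> real" and eta :: real
  assumes eta: "0 < eta"
    and p_nonneg: "\<forall>i<n. 0 \<le> p i" and p_sum: "(\<Sum>i<n. p i) = 1"
    and centered: "(\<Sum>i<n. p i * X i) = 0" and X_le: "\<forall>i<n. X i \<le> 1"
  defines "E \<equiv> \<Sum>i<n. p i * exp (eta * X i)"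
  shows "1 \<le> E" and "ln E \<le> eta"
    and "eta < 3 \<Longrightarrow> ln E \<le> 3 / (6 - 2*eta) * eta^2 * (\<Sum>i<n. p i * (X i)^2)"
proof -
  have affine: "(\<Sum>i<n. p i * (1 + eta * X i + K * (eta * X i)^2))
      = 1 + K * eta^2 * (\<Sum>i<n. p i * (X i)^2)" for K
  proof -
    have "(\<Sum>i<n. p i * (1 + eta * X i + K * (eta * X i)^2))
        = (\<Sum>i<n. p i) + eta * (\<Sum>i<n. p i * X i) + K * eta^2 * (\<Sum>i<n. p i * (X i)^2)"
      by (simp add: sum.distrib sum_distrib_left algebra_simps power2_eq_square)
    then show ?thesis
      using p_sum centered by simp
  qed
  have "(\<Sum>i<n. p i * (1 + eta * X i + 0 * (eta * X i)^2)) \<le> E"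
    unfolding E_def using p_nonneg by (intro sum_mono mult_left_mono) auto
  then show E_ge: "1 \<le> E"
    using affine[of 0] by simp
  have "E \<le> (\<Sum>i<n. p i * exp eta)"
    unfolding E_def using p_nonneg X_le eta by (intro sum_mono mult_left_mono) auto
  then have "E \<le> exp eta"
    using p_sum by (simp flip: sum_distrib_right)
  then show "ln E \<le> eta"
    using E_ge ln_le_cancel_iff[of E "exp eta"] by simp
  assume "eta < 3"
  then have "E \<le> (\<Sum>i<n. p i * (1 + eta * X i + 3 / (6 - 2*eta) * (eta * X i)^2))"
    unfolding E_def using p_nonneg X_le eta
    by (intro sum_mono mult_left_mono exp_le_quadratic) auto
  then have "E \<le> 1 + 3 / (6 - 2*eta) * eta^2 * (\<Sum>i<n. p i * (X i)^2)"
    unfolding affine .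
  then show "ln E \<le> 3 / (6 - 2*eta) * eta^2 * (\<Sum>i<n. p i * (X i)^2)"
    using ln_le_minus_one[of E] E_ge by simp
qed

definition mix_loss :: "nat \<Rightarrow> real \<Rightarrow> (nat \<Rightarrow> real) \<Rightarrow> (nat \<Rightarrow> real) \<Rightarrow> real" where
  "mix_loss n eta p l = - (1 / eta) * ln (\<Sum>i<n. p i * exp (- eta * l i))"

lemma mixability_gap_bounds:
  fixes p l :: "nat \<Rightarrow> real" and eta :: real
  assumes eta: "0 < eta"
    and p_nonneg: "\<forall>i<n. 0 \<le> p i" and p_sum: "(\<Sum>i<n. p i) = 1"
    and l01: "\<forall>i<n. 0 \<le> l i \<and> l i \<le> 1"
  defines "h \<equiv> \<Sum>i<n. p i * l i"
  defines "v \<equiv> \<Sum>i<n. p i * (h - l i)^2"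
  shows "0 \<le> h - mix_loss n eta p l" and "h - mix_loss n eta p l \<le> 1"
    and "(h - mix_loss n eta p l) * (1 - eta / 3) \<le> eta * v / 2"
proof -
  define E where "E = (\<Sum>i<n. p i * exp (eta * (h - l i)))"
  have h_le: "h \<le> 1"
    using p_nonneg l01 p_sum sum_mono[of "{..<n}" "\<lambda>i. p i * l i" p]
    unfolding h_def by (simp add: mult_left_le)
  have centered: "(\<Sum>i<n. p i * (h - l i)) = 0"
    using p_sum by (simp add: right_diff_distrib sum_subtractf h_def flip: sum_distrib_right)
  have X_le: "\<forall>i<n. h - l i \<le> 1"
    using h_le l01 by auto
  note mgf = ln_mgf_centered_bounds[OF eta p_nonneg p_sum centered X_le, folded E_def]
  have "(\<Sum>i<n. p i * exp (- eta * l i)) = exp (- eta * h) * E"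
    unfolding E_def sum_distrib_left by (intro sum.cong refl) (simp add: mult_exp_exp algebra_simps)
  then have gap: "h - mix_loss n eta p l = ln E / eta"
    using mgf(1) eta by (simp add: mix_loss_def ln_mult field_simps)
  show "0 \<le> h - mix_loss n eta p l"
    unfolding gap using mgf(1) eta by simp
  show "h - mix_loss n eta p l \<le> 1"
    unfolding gap using mgf(2) eta by simp
  show "(h - mix_loss n eta p l) * (1 - eta / 3) \<le> eta * v / 2"
  proof (cases "eta < 3")
    case True
    have "ln E / eta * (1 - eta / 3) \<le> 3 / (6 - 2*eta) * eta * v * (1 - eta / 3)"
      using mgf(3)[OF True] True eta unfolding v_def
      by (intro mult_right_mono) (auto simp: divide_le_eq power2_eq_square algebra_simps)
    also have "\<dots> = eta * v / 2"
      using True by (simp add: field_simps)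
    finally show ?thesis
      unfolding gap .
  next
    case False
    have "ln E / eta * (1 - eta / 3) \<le> 0"
      using False mgf(1) eta by (intro mult_nonneg_nonpos) auto
    moreover have "0 \<le> eta * v / 2"
      unfolding v_def using p_nonneg eta by (intro divide_nonneg_pos mult_nonneg_nonneg sum_nonneg) auto
    ultimately show ?thesis
      unfolding gap by linarith
  qed
qed

definition softmin :: "nat \<Rightarrow> real \<Rightarrow> (nat \<Rightarrow> real) \<Rightarrow> real" where
  "softmin n eta L = - (1 / eta) * ln ((\<Sum>j<n. exp (- eta * L j)) / real n)"

lemma softmin_antimono:
  assumes n: "0 < n" and ab: "0 < a" "a \<le> b"
  shows "softmin n b L \<le> softmin n a L"
proof -
  define w where "w j = exp (- a * L j)" for j
  define r where "r = b / a"
  have r: "1 \<le> r"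
    using ab by (simp add: r_def)
  have w_powr: "exp (- b * L j) = w j powr r" for j
    unfolding w_def r_def exp_powr_real using ab by (simp add: field_simps)
  have mean_pos: "0 < (\<Sum>j<n. exp (- c * L j)) / real n" for c
    using n by (intro divide_pos_pos sum_pos) auto
  have "(\<lambda>x. x powr r) (\<Sum>j<n. (1 / real n) *\<^sub>R w j) \<le> (\<Sum>j<n. (1 / real n) * (\<lambda>x. x powr r) (w j))"
    by (rule convex_on_sum[where C="{0<..}"]) (use n r powr_convex in \<open>auto simp: w_def\<close>)
  then have "((\<Sum>j<n. w j) / real n) powr r \<le> (\<Sum>j<n. exp (- b * L j)) / real n"
    unfolding w_powr by (simp add: sum_divide_distrib)
  moreover have "0 < (\<Sum>j<n. w j) / real n"
    using mean_pos[of a] by (simp add: w_def)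
  ultimately have "ln (((\<Sum>j<n. w j) / real n) powr r) \<le> ln ((\<Sum>j<n. exp (- b * L j)) / real n)"
    using mean_pos[of b] n by (subst ln_le_cancel_iff) auto
  then have "r * ln ((\<Sum>j<n. w j) / real n) \<le> ln ((\<Sum>j<n. exp (- b * L j)) / real n)"
    by simp
  then have "- (1 / b) * ln ((\<Sum>j<n. exp (- b * L j)) / real n)
      \<le> - (1 / b) * (r * ln ((\<Sum>j<n. w j) / real n))"
    using ab by (intro mult_left_mono_neg) auto
  also have "\<dots> = - (1 / a) * ln ((\<Sum>j<n. w j) / real n)"
    using ab by (simp add: r_def)
  finally show ?thesis
    unfolding softmin_def w_def .
qed

lemma Min_le_softmin:
  assumes n: "0 < n" and a: "0 < a"
  shows "Min (L ` {..<n}) \<le> softmin n a L"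
proof -
  define m where "m = Min (L ` {..<n})"
  have "(\<Sum>j<n. exp (- a * L j)) \<le> (\<Sum>j<n. exp (- a * m))"
    unfolding m_def using a by (intro sum_mono) auto
  then have "(\<Sum>j<n. exp (- a * L j)) / real n \<le> exp (- a * m)"
    using n by (simp add: divide_le_eq mult.commute)
  moreover have "0 < (\<Sum>j<n. exp (- a * L j)) / real n"
    using n by (intro divide_pos_pos sum_pos) auto
  ultimately have "ln ((\<Sum>j<n. exp (- a * L j)) / real n) \<le> - a * m"
    by (metis ln_exp ln_le_cancel_iff exp_gt_zero)
  then have "- (1 / a) * (- a * m) \<le> - (1 / a) * ln ((\<Sum>j<n. exp (- a * L j)) / real n)"
    using a by (intro mult_left_mono_neg) auto
  then show ?thesis
    using a unfolding softmin_def m_def by simp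
qed

lemma softmin_le:
  assumes i: "i < n" and a: "0 < a"
  shows "softmin n a L \<le> L i + ln (real n) / a"
proof -
  have "exp (- a * L i) / real n \<le> (\<Sum>j<n. exp (- a * L j)) / real n"
    using i by (intro divide_right_mono member_le_sum) auto
  then have "ln (exp (- a * L i) / real n) \<le> ln ((\<Sum>j<n. exp (- a * L j)) / real n)"
    using i by (subst ln_le_cancel_iff) (auto intro!: divide_pos_pos sum_pos)
  then have "- a * L i - ln (real n) \<le> ln ((\<Sum>j<n. exp (- a * L j)) / real n)"
    using i by (simp add: ln_div)
  then have "- (1 / a) * ln ((\<Sum>j<n. exp (- a * L j)) / real n) \<le> - (1 / a) * (- a * L i - ln (real n))"
    using a by (intro mult_left_mono_neg) auto
  also have "\<dots> = L i + ln (real n) / a"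
    using a by (simp add: field_simps)
  finally show ?thesis
    unfolding softmin_def .
qed

text \<open>At D = 0 the learning rate ln d / D is \<infinity>, and the soft minimum becomes the minimum.\<close>
definition ah_potential :: "nat \<Rightarrow> real \<Rightarrow> (nat \<Rightarrow> real) \<Rightarrow> real" where
  "ah_potential d D L = (if D = 0 then Min (L ` {..<d}) else softmin d (ln (real d) / D) L)"

lemma ah_potential_mono:
  assumes d: "1 \<le> d" and D: "0 \<le> D1" "D1 \<le> D2" and d2: "D2 \<noteq> 0 \<Longrightarrow> 2 \<le> d"
  shows "ah_potential d D1 L \<le> ah_potential d D2 L"
proof (cases "D1 = D2")
  case False
  then have D2: "0 < D2"
    using D by auto
  have ln_d: "0 < ln (real d)"
    using d2 D2 by simp
  show ?thesis
  proof (cases "D1 = 0")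
    case True
    then show ?thesis
      unfolding ah_potential_def using d ln_d D2 by (simp add: Min_le_softmin)
  next
    case False
    have "softmin d (ln (real d) / D1) L \<le> softmin d (ln (real d) / D2) L"
      using d ln_d D2 D False by (intro softmin_antimono) (auto intro!: divide_left_mono)
    then show ?thesis
      unfolding ah_potential_def using False D2 by simp
  qed
qed simp

lemma ah_potential_le:
  assumes D: "0 \<le> D" and d2: "D \<noteq> 0 \<Longrightarrow> 2 \<le> d" and i: "i < d"
  shows "ah_potential d D L \<le> L i + D"
proof (cases "D = 0")
  case True
  then show ?thesis
    unfolding ah_potential_def using i by simp
next
  case False
  have "0 < ln (real d)"
    using d2 False by simp
  then show ?thesis
    unfolding ah_potential_def using softmin_le[OF i, of "ln (real d) / D" L] D False by simp
qed

section \<open>One round of AdaHedge\<close>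

lemma loss_bounds:
  assumes "yt \<in> {-1, 1}" "x \<in> {-1..1}"
  shows "0 \<le> loss yt x" and "loss yt x \<le> 1"
  using assms by (auto simp: loss_def)

lemma cumloss_0 [simp]: "cumloss y ex 0 i = 0"
  by (simp add: cumloss_def)

lemma cumloss_Suc: "cumloss y ex (Suc t) i = cumloss y ex t i + loss (y t) (ex t i)"
  by (simp add: cumloss_def)

definition experts_tied :: "nat \<Rightarrow> (nat \<Rightarrow> real) \<Rightarrow> (nat \<Rightarrow> nat \<Rightarrow> real) \<Rightarrow> nat \<Rightarrow> bool" where
  "experts_tied d y ex t \<longleftrightarrow> (\<forall>i<d. cumloss y ex t i = cumloss y ex t 0)"

text \<open>A zero cumulative gap means that every earlier round had zero gap, which forces all experts
  to be tied; so the leaders receiving the weight at learning rate \<infinity> are all experts.\<close>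
definition ah_invariant :: "nat \<Rightarrow> (nat \<Rightarrow> real) \<Rightarrow> (nat \<Rightarrow> nat \<Rightarrow> real) \<Rightarrow> real \<Rightarrow> nat \<Rightarrow> bool" where
  "ah_invariant d y ex D t \<longleftrightarrow> 0 \<le> D \<and> (D = 0 \<longrightarrow> experts_tied d y ex t) \<and> (D \<noteq> 0 \<longrightarrow> 2 \<le> d)"

lemma Min_cumloss_tied:
  assumes "experts_tied d y ex t" "1 \<le> d"
  shows "Min (cumloss y ex t ` {..<d}) = cumloss y ex t 0"
proof -
  have "cumloss y ex t ` {..<d} = {cumloss y ex t 0}"
  proof
    show "cumloss y ex t ` {..<d} \<subseteq> {cumloss y ex t 0}"
      using assms(1) unfolding experts_tied_def by blast
    show "{cumloss y ex t 0} \<subseteq> cumloss y ex t ` {..<d}"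
      using assms(2) by force
  qed
  then show ?thesis
    by simp
qed

lemma ah_weights_tied:
  assumes "experts_tied d y ex t" "1 \<le> d"
  shows "ah_weights d y ex 0 t i = (if i < d then 1 / real d else 0)"
proof -
  have leaders: "{j \<in> {..<d}. cumloss y ex t j = Min (cumloss y ex t ` {..<d})} = {..<d}"
    unfolding Min_cumloss_tied[OF assms] using assms(1) unfolding experts_tied_def by auto
  show ?thesis
    unfolding ah_weights_def Let_def leaders by simp
qed

lemma ah_weights_nonzero_gap:
  assumes "D \<noteq> 0"
  shows "ah_weights d y ex D t i = (if i < d then exp (- (ln (real d) / D) * cumloss y ex t i)
      / (\<Sum>j<d. exp (- (ln (real d) / D) * cumloss y ex t j)) else 0)"
  using assms unfolding ah_weights_def by (simp add: Let_def)

lemma ah_weights_distribution: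
  assumes "ah_invariant d y ex D t" "1 \<le> d"
  shows "0 \<le> ah_weights d y ex D t i" and "(\<Sum>i<d. ah_weights d y ex D t i) = 1"
proof -
  have "(\<forall>i. 0 \<le> ah_weights d y ex D t i) \<and> (\<Sum>i<d. ah_weights d y ex D t i) = 1"
  proof (cases "D = 0")
    case True
    then show ?thesis
      using assms ah_weights_tied[of d y ex t] unfolding ah_invariant_def by simp
  next
    case False
    have "0 < (\<Sum>j<d. exp (- (ln (real d) / D) * cumloss y ex t j))"
      using assms by (intro sum_pos) (auto simp: lessThan_empty_iff)
    then show ?thesis
      using False by (auto simp: ah_weights_nonzero_gap sum_divide_distrib[symmetric])
  qed
  then show "0 \<le> ah_weights d y ex D t i" and "(\<Sum>i<d. ah_weights d y ex D t i) = 1"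
    by auto
qed

lemma ah_gap_tied:
  assumes tied: "experts_tied d y ex t" and d: "1 \<le> d"
  shows "ah_gap d y ex 0 t
    = (\<Sum>i<d. loss (y t) (ex t i)) / real d - Min ((\<lambda>i. loss (y t) (ex t i)) ` {..<d})"
proof -
  have w: "ah_weights d y ex 0 t i = 1 / real d" if "i < d" for i
    using ah_weights_tied[OF tied d] that by simp
  then have "{loss (y t) (ex t i) |i. i < d \<and> 0 < ah_weights d y ex 0 t i}
      = (\<lambda>i. loss (y t) (ex t i)) ` {..<d}"
    using d by (auto simp: image_def)
  then show ?thesis
    unfolding ah_gap_def Let_def using w by (simp add: sum_divide_distrib)
qed

lemma ah_round_tied:
  assumes yt: "y t \<in> {-1, 1}" and ext: "\<forall>j<d. ex t j \<in> {-1..1}" and d: "1 \<le> d"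
    and tied: "experts_tied d y ex t"
  defines "h \<equiv> \<Sum>i<d. ah_weights d y ex 0 t i * loss (y t) (ex t i)"
  defines "g \<equiv> ah_gap d y ex 0 t"
  shows "0 \<le> g" and "g \<le> 1"
    and "h - g \<le> ah_potential d 0 (cumloss y ex (Suc t)) - ah_potential d 0 (cumloss y ex t)"
    and "ah_invariant d y ex g (Suc t)"
proof -
  define l where "l i = loss (y t) (ex t i)" for i
  define m where "m = Min (l ` {..<d})"
  have l01: "\<forall>i<d. 0 \<le> l i \<and> l i \<le> 1"
    using loss_bounds yt ext unfolding l_def by auto
  note mean = mean_minus_Min_bounds[OF d l01, folded m_def]
  have h_eq: "h = (\<Sum>i<d. l i) / real d"
    unfolding h_def l_def using ah_weights_tied[OF tied d] by (simp add: sum_divide_distrib)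
  have g_eq: "g = h - m"
    unfolding g_def h_eq m_def l_def using ah_gap_tied[OF tied d] by simp
  show g_nonneg: "0 \<le> g" and "g \<le> 1"
    using mean unfolding g_eq h_eq by simp_all
  obtain c where c: "\<forall>i<d. cumloss y ex t i = c"
    using tied unfolding experts_tied_def by blast
  have "c + m \<le> cumloss y ex (Suc t) i" if "i < d" for i
    using that c unfolding m_def by (simp add: cumloss_Suc l_def)
  then have "c + m \<le> Min (cumloss y ex (Suc t) ` {..<d})"
    using d by (subst Min_ge_iff) (auto simp: lessThan_empty_iff)
  moreover have "Min (cumloss y ex t ` {..<d}) = c"
    using Min_cumloss_tied[OF tied d] c d by simp
  ultimately show "h - g \<le> ah_potential d 0 (cumloss y ex (Suc t)) - ah_potential d 0 (cumloss y ex t)"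
    unfolding ah_potential_def g_eq by simp
  have "experts_tied d y ex (Suc t)" if "g = 0"
    using that mean(3) c d unfolding g_eq h_eq experts_tied_def by (simp add: cumloss_Suc l_def)
  moreover have "g = 0" if "d = 1"
    using that unfolding g_eq h_eq m_def by (simp add: lessThan_Suc)
  ultimately show "ah_invariant d y ex g (Suc t)"
    unfolding ah_invariant_def using g_nonneg d by fastforce
qed

lemma mix_loss_ah_weights:
  assumes d: "1 \<le> d" and D: "D \<noteq> 0"
  shows "mix_loss d (ln (real d) / D) (ah_weights d y ex D t) (\<lambda>i. loss (y t) (ex t i))
    = ah_potential d D (cumloss y ex (Suc t)) - ah_potential d D (cumloss y ex t)"
proof -
  define eta where "eta = ln (real d) / D"
  define S where "S k = (\<Sum>j<d. exp (- eta * cumloss y ex k j))" for k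
  have S_pos: "0 < S k" for k
    unfolding S_def using d by (intro sum_pos) (auto simp: lessThan_empty_iff)
  have "(\<Sum>i<d. ah_weights d y ex D t i * exp (- eta * loss (y t) (ex t i))) = S (Suc t) / S t"
    unfolding S_def sum_divide_distrib using D
    by (intro sum.cong refl) (simp add: ah_weights_nonzero_gap eta_def cumloss_Suc distrib_left mult_exp_exp)
  then have "ln (\<Sum>i<d. ah_weights d y ex D t i * exp (- eta * loss (y t) (ex t i)))
      = ln (S (Suc t) / real d) - ln (S t / real d)"
    using S_pos[of t] S_pos[of "Suc t"] d by (simp add: ln_div)
  then show ?thesis
    unfolding mix_loss_def ah_potential_def softmin_def S_def[symmetric] eta_def[symmetric]
    using D by (simp add: diff_divide_distrib)
qed

lemma ah_round_hedge:
  assumes yt: "y t \<in> {-1, 1}" and ext: "\<forall>j<d. ex t j \<in> {-1..1}" and d: "2 \<le> d"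
    and D: "0 < D"
  defines "w \<equiv> ah_weights d y ex D t"
  defines "h \<equiv> \<Sum>i<d. w i * loss (y t) (ex t i)"
  defines "v \<equiv> \<Sum>i<d. w i * (h - loss (y t) (ex t i))^2"
  defines "g \<equiv> ah_gap d y ex D t"
  shows "0 \<le> g" and "g \<le> 1" and "2 * D * g \<le> ln (real d) * v + 2/3 * ln (real d) * g"
    and "h - g = ah_potential d D (cumloss y ex (Suc t)) - ah_potential d D (cumloss y ex t)"
proof -
  define eta where "eta = ln (real d) / D"
  define l where "l i = loss (y t) (ex t i)" for i
  have eta: "0 < eta"
    using d D by (simp add: eta_def)
  have w: "\<forall>i<d. 0 \<le> w i" "(\<Sum>i<d. w i) = 1"
    using ah_weights_distribution[of d y ex D t] d D unfolding w_def ah_invariant_def by auto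
  have l01: "\<forall>i<d. 0 \<le> l i \<and> l i \<le> 1"
    using loss_bounds yt ext unfolding l_def by auto
  have g_eq: "g = h - mix_loss d eta w l"
    unfolding g_def h_def ah_gap_def mix_loss_def Let_def eta_def l_def w_def using D by simp
  have gap: "0 \<le> g" "g \<le> 1" "g * (1 - eta / 3) \<le> eta * v / 2"
    using mixability_gap_bounds[OF eta w l01] unfolding g_eq h_def v_def l_def by simp_all
  then show "0 \<le> g" and "g \<le> 1"
    by simp_all
  have "2 * D * g - 2/3 * ln (real d) * g = 2 * D * (g * (1 - eta / 3))"
    using D by (simp add: eta_def algebra_simps)
  also have "\<dots> \<le> 2 * D * (eta * v / 2)"
    using gap D by (intro mult_left_mono) auto
  also have "\<dots> = ln (real d) * v"
    using D by (simp add: eta_def)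
  finally show "2 * D * g \<le> ln (real d) * v + 2/3 * ln (real d) * g"
    by simp
  show "h - g = ah_potential d D (cumloss y ex (Suc t)) - ah_potential d D (cumloss y ex t)"
    using mix_loss_ah_weights[of d D y ex t] d D unfolding g_eq eta_def w_def l_def by simp
qed

lemma ah_round:
  assumes yt: "y t \<in> {-1, 1}" and ext: "\<forall>j<d. ex t j \<in> {-1..1}" and d: "1 \<le> d"
    and inv: "ah_invariant d y ex D t"
  defines "w \<equiv> ah_weights d y ex D t"
  defines "h \<equiv> \<Sum>i<d. w i * loss (y t) (ex t i)"
  defines "v \<equiv> \<Sum>i<d. w i * (h - loss (y t) (ex t i))^2"
  defines "g \<equiv> ah_gap d y ex D t"
  shows "0 \<le> g" and "g \<le> 1" and "2 * D * g \<le> ln (real d) * v + 2/3 * ln (real d) * g"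
    and "h - g \<le> ah_potential d D (cumloss y ex (Suc t)) - ah_potential d D (cumloss y ex t)"
    and "ah_invariant d y ex (D + g) (Suc t)"
proof -
  have "0 \<le> g \<and> g \<le> 1 \<and> 2 * D * g \<le> ln (real d) * v + 2/3 * ln (real d) * g
    \<and> h - g \<le> ah_potential d D (cumloss y ex (Suc t)) - ah_potential d D (cumloss y ex t)
    \<and> ah_invariant d y ex (D + g) (Suc t)"
  proof (cases "D = 0")
    case True
    have "experts_tied d y ex t"
      using inv True unfolding ah_invariant_def by simp
    note round = ah_round_tied[OF yt ext d this]
    have "0 \<le> v"
      unfolding v_def using ah_weights_distribution(1)[OF inv d] by (intro sum_nonneg) (simp add: w_def)
    then show ?thesis
      using round True d unfolding h_def w_def g_def by simp
  next
    case False
    then have "2 \<le> d" "0 < D"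
      using inv unfolding ah_invariant_def by auto
    note round = ah_round_hedge[of y t d ex D, OF yt ext this]
    then show ?thesis
      using \<open>0 < D\<close> \<open>2 \<le> d\<close> unfolding ah_invariant_def h_def v_def w_def g_def by simp
  qed
  then show "0 \<le> g" and "g \<le> 1" and "2 * D * g \<le> ln (real d) * v + 2/3 * ln (real d) * g"
    and "h - g \<le> ah_potential d D (cumloss y ex (Suc t)) - ah_potential d D (cumloss y ex t)"
    and "ah_invariant d y ex (D + g) (Suc t)"
    by auto
qed

section \<open>AdaHedge with abstention\<close>

lemma weighted_variance_le:
  fixes p l :: "nat \<Rightarrow> real"
  assumes p_nonneg: "\<forall>i<n. 0 \<le> p i" and p_sum: "(\<Sum>i<n. p i) = 1"
    and l01: "\<forall>i<n. 0 \<le> l i \<and> l i \<le> 1"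
  defines "\<mu> \<equiv> \<Sum>i<n. p i * l i"
  shows "(\<Sum>i<n. p i * (\<mu> - l i)^2) \<le> \<mu> * (1 - \<mu>)"
proof -
  have "p i * (\<mu> - l i)^2 = \<mu>^2 * p i - 2 * \<mu> * (p i * l i) + p i * (l i)^2" for i
    by (simp add: power2_eq_square algebra_simps)
  then have "(\<Sum>i<n. p i * (\<mu> - l i)^2)
      = \<mu>^2 * (\<Sum>i<n. p i) - 2 * \<mu> * (\<Sum>i<n. p i * l i) + (\<Sum>i<n. p i * (l i)^2)"
    by (simp only: sum.distrib sum_subtractf flip: sum_distrib_left)
  then have "(\<Sum>i<n. p i * (\<mu> - l i)^2) = (\<Sum>i<n. p i * (l i)^2) - \<mu>^2"
    using p_sum by (simp add: power2_eq_square flip: \<mu>_def)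
  moreover have "(\<Sum>i<n. p i * (l i)^2) \<le> \<mu>"
    unfolding \<mu>_def using p_nonneg l01
    by (intro sum_mono mult_left_mono) (auto simp: power2_eq_square mult_left_le_one_le)
  ultimately show ?thesis
    by (simp add: power2_eq_square algebra_simps)
qed

lemma loss_mul_one_minus_loss_le:
  assumes "yt \<in> {-1, 1}"
  shows "loss yt x * (1 - loss yt x) \<le> (1 - \<bar>x\<bar>) / 2"
proof -
  have "loss yt x * (1 - loss yt x) = (1 - x^2) / 4"
    using assms by (auto simp: loss_def power2_eq_square field_simps)
  moreover have "0 \<le> (\<bar>x\<bar> - 1)^2"
    by simp
  ultimately show ?thesis
    by (simp add: power2_eq_square algebra_simps)
qed

lemma abstaining_loss_eq:
  assumes "yt \<in> {-1, 1}" "\<bar>x\<bar> \<le> 1"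
  shows "\<bar>x\<bar> * loss yt (sgn x) + (1 - \<bar>x\<bar>) * c = loss yt x - (1 - \<bar>x\<bar>) * (1/2 - c)"
  using assms by (cases "x > 0"; cases "x = 0"; auto simp: loss_def sgn_if field_simps)

locale adahedge_run =
  fixes d T :: nat and y :: "nat \<Rightarrow> real" and ex :: "nat \<Rightarrow> nat \<Rightarrow> real"
  assumes labels: "\<forall>t<T. y t \<in> {-1, 1}"
    and predictions: "\<forall>t<T. \<forall>j<d. ex t j \<in> {-1..1}"
    and experts: "1 \<le> d"
begin

abbreviation Delta :: "nat \<Rightarrow> real" where
  "Delta t \<equiv> ah_Delta d y ex t"

abbreviation gap :: "nat \<Rightarrow> real" where
  "gap t \<equiv> ah_gap d y ex (Delta t) t"

lemma invariant: "t \<le> T \<Longrightarrow> ah_invariant d y ex (Delta t) t"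
proof (induction t)
  case 0
  then show ?case
    by (simp add: ah_invariant_def experts_tied_def)
next
  case (Suc t)
  then show ?case
    using ah_round(5)[of y t d ex "Delta t"] labels predictions experts by simp
qed

lemma weights_distribution:
  assumes "t \<le> T"
  shows "0 \<le> ah_p d y ex t i" and "(\<Sum>i<d. ah_p d y ex t i) = 1"
  using ah_weights_distribution[OF invariant[OF assms] experts] unfolding ah_p_def by auto

lemma loss_yhat:
  assumes "t < T"
  shows "loss (y t) (yhat d y ex t) = (\<Sum>i<d. ah_p d y ex t i * loss (y t) (ex t i))"
proof -
  have "(\<Sum>i<d. ah_p d y ex t i * loss (y t) (ex t i))
      = (\<Sum>i<d. ah_p d y ex t i) / 2 - y t / 2 * yhat d y ex t"
    unfolding loss_def yhat_def
    by (simp add: sum_subtractf sum_divide_distrib sum_distrib_left algebra_simps diff_divide_distrib)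
  then show ?thesis
    using weights_distribution(2)[of t] assms by (simp add: loss_def diff_divide_distrib)
qed

lemma round_bounds:
  assumes "t < T"
  shows "0 \<le> gap t" and "gap t \<le> 1"
    and "2 * Delta t * gap t \<le> ln (real d) * vt d y ex t + 2/3 * ln (real d) * gap t"
    and "loss (y t) (yhat d y ex t) - gap t
      \<le> ah_potential d (Delta t) (cumloss y ex (Suc t)) - ah_potential d (Delta t) (cumloss y ex t)"
proof -
  have "y t \<in> {-1, 1}" and "\<forall>j<d. ex t j \<in> {-1..1}" and "t \<le> T"
    using labels predictions assms by auto
  note round = ah_round[OF this(1,2) experts invariant[OF this(3)]]
  have h: "loss (y t) (yhat d y ex t) = (\<Sum>i<d. ah_weights d y ex (Delta t) t i * loss (y t) (ex t i))"
    using loss_yhat[OF assms] unfolding ah_p_def .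
  then have v: "vt d y ex t = (\<Sum>i<d. ah_weights d y ex (Delta t) t i *
      ((\<Sum>i<d. ah_weights d y ex (Delta t) t i * loss (y t) (ex t i)) - loss (y t) (ex t i))^2)"
    unfolding vt_def ah_p_def by simp
  show "0 \<le> gap t" and "gap t \<le> 1"
    using round(1,2) .
  show "2 * Delta t * gap t \<le> ln (real d) * vt d y ex t + 2/3 * ln (real d) * gap t"
    unfolding v using round(3) .
  show "loss (y t) (yhat d y ex t) - gap t
      \<le> ah_potential d (Delta t) (cumloss y ex (Suc t)) - ah_potential d (Delta t) (cumloss y ex t)"
    unfolding h using round(4) .
qed

lemma mix_loss_sum_le_potential:
  "t \<le> T \<Longrightarrow> (\<Sum>s<t. loss (y s) (yhat d y ex s) - gap s) \<le> ah_potential d (Delta t) (cumloss y ex t)"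
proof (induction t)
  case 0
  have "experts_tied d y ex 0"
    by (simp add: experts_tied_def)
  from Min_cumloss_tied[OF this experts] show ?case
    by (simp add: ah_potential_def)
next
  case (Suc t)
  then have "t < T"
    by simp
  have "(\<Sum>s<Suc t. loss (y s) (yhat d y ex s) - gap s)
      \<le> ah_potential d (Delta t) (cumloss y ex (Suc t))"
    using Suc round_bounds(4)[OF \<open>t < T\<close>] by simp
  also have "\<dots> \<le> ah_potential d (Delta (Suc t)) (cumloss y ex (Suc t))"
    using invariant[of t] invariant[of "Suc t"] round_bounds(1)[OF \<open>t < T\<close>] \<open>t < T\<close> experts
    by (intro ah_potential_mono) (auto simp: ah_invariant_def)
  finally show ?case .
qed

lemma Delta_eq_sum: "Delta t = (\<Sum>s<t. gap s)"
  by (induction t) simp_all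

lemma Delta_square_le:
  "t \<le> T \<Longrightarrow> (Delta t)^2 \<le> ln (real d) * (\<Sum>s<t. vt d y ex s) + (2/3 * ln (real d) + 1) * Delta t"
proof (induction t)
  case (Suc t)
  then have "t < T"
    by simp
  note bounds = round_bounds[OF this]
  have "(gap t)^2 \<le> gap t"
    using bounds(1,2) by (simp add: power2_eq_square mult_left_le_one_le)
  have "(Delta (Suc t))^2 = (Delta t)^2 + 2 * Delta t * gap t + (gap t)^2"
    by (simp add: power2_eq_square algebra_simps)
  also have "\<dots> \<le> (ln (real d) * (\<Sum>s<t. vt d y ex s) + (2/3 * ln (real d) + 1) * Delta t)
      + (ln (real d) * vt d y ex t + 2/3 * ln (real d) * gap t) + gap t"
    using Suc \<open>t < T\<close> bounds(3) \<open>(gap t)^2 \<le> gap t\<close> by simp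
  also have "\<dots> = ln (real d) * (\<Sum>s<Suc t. vt d y ex s) + (2/3 * ln (real d) + 1) * Delta (Suc t)"
    by (simp add: algebra_simps)
  finally show ?case .
qed simp

lemma vt_nonneg: "t < T \<Longrightarrow> 0 \<le> vt d y ex t"
  unfolding vt_def using weights_distribution(1) by (intro sum_nonneg) simp

lemma Delta_le: "Delta T \<le> sqrt (ln (real d) * (\<Sum>t<T. vt d y ex t)) + 2/3 * ln (real d) + 1"
proof -
  have "0 \<le> ln (real d) * (\<Sum>t<T. vt d y ex t)"
    using experts vt_nonneg by (intro mult_nonneg_nonneg sum_nonneg) auto
  then have "Delta T \<le> sqrt (ln (real d) * (\<Sum>t<T. vt d y ex t)) + (2/3 * ln (real d) + 1)"
    using invariant[of T] Delta_square_le[of T] experts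
    by (intro le_sqrt_add_of_square_le) (auto simp: ah_invariant_def)
  then show ?thesis
    by simp
qed

theorem regret_le:
  assumes "i < d"
  shows "(\<Sum>t<T. loss (y t) (yhat d y ex t))
    \<le> (\<Sum>t<T. loss (y t) (ex t i)) + 2 * sqrt (ln (real d) * (\<Sum>t<T. vt d y ex t)) + 4/3 * ln (real d) + 2"
proof -
  have inv: "0 \<le> Delta T" "Delta T \<noteq> 0 \<Longrightarrow> 2 \<le> d"
    using invariant[of T] unfolding ah_invariant_def by auto
  have "(\<Sum>t<T. loss (y t) (yhat d y ex t)) = (\<Sum>t<T. loss (y t) (yhat d y ex t) - gap t) + Delta T"
    by (simp add: Delta_eq_sum[of T] sum_subtractf)
  also have "\<dots> \<le> ah_potential d (Delta T) (cumloss y ex T) + Delta T"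
    using mix_loss_sum_le_potential[of T] by simp
  also have "\<dots> \<le> cumloss y ex T i + 2 * Delta T"
    using ah_potential_le[OF inv assms, of "cumloss y ex T"] by simp
  also have "\<dots> \<le> cumloss y ex T i + 2 * (sqrt (ln (real d) * (\<Sum>t<T. vt d y ex t)) + 2/3 * ln (real d) + 1)"
    using Delta_le by simp
  finally show ?thesis
    unfolding cumloss_def by (simp add: algebra_simps)
qed

lemma abs_yhat_le: "t < T \<Longrightarrow> \<bar>yhat d y ex t\<bar> \<le> 1"
proof -
  assume "t < T"
  then have p: "\<forall>i. 0 \<le> ah_p d y ex t i" "(\<Sum>i<d. ah_p d y ex t i) = 1"
    using weights_distribution by auto
  have "\<bar>yhat d y ex t\<bar> \<le> (\<Sum>i<d. \<bar>ah_p d y ex t i * ex t i\<bar>)"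
    unfolding yhat_def by (rule sum_abs)
  also have "\<dots> \<le> (\<Sum>i<d. ah_p d y ex t i * 1)"
    using p predictions \<open>t < T\<close>
    by (intro sum_mono) (auto simp: abs_mult abs_le_iff intro: mult_left_le)
  finally show ?thesis
    using p by simp
qed

lemma abst_nonneg: "t < T \<Longrightarrow> 0 \<le> abst d y ex t"
  using abs_yhat_le by (simp add: abst_def)

lemma expected_loss_eq:
  assumes "t < T"
  shows "(1 - abst d y ex t) * loss (y t) (ystar d y ex t) + abst d y ex t * c
    = loss (y t) (yhat d y ex t) - abst d y ex t * (1/2 - c)"
  using abstaining_loss_eq[of "y t" "yhat d y ex t" c] labels abs_yhat_le assms
  unfolding abst_def ystar_def by simp

lemma vt_le_half_abst:
  assumes "t < T"
  shows "vt d y ex t \<le> abst d y ex t / 2"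
proof -
  have "vt d y ex t \<le> loss (y t) (yhat d y ex t) * (1 - loss (y t) (yhat d y ex t))"
    unfolding vt_def loss_yhat[OF assms]
    using weights_distribution[of t] loss_bounds labels predictions assms
    by (intro weighted_variance_le) auto
  also have "\<dots> \<le> abst d y ex t / 2"
    using loss_mul_one_minus_loss_le labels assms by (simp add: abst_def)
  finally show ?thesis .
qed

lemma abstention_loss_le:
  assumes "\<forall>t<T. c t \<le> cmax"
  shows "(\<Sum>t<T. (1 - abst d y ex t) * loss (y t) (ystar d y ex t) + abst d y ex t * c t)
    \<le> (\<Sum>t<T. loss (y t) (yhat d y ex t)) - (1/2 - cmax) * (\<Sum>t<T. abst d y ex t)"
proof -
  have "(\<Sum>t<T. (1 - abst d y ex t) * loss (y t) (ystar d y ex t) + abst d y ex t * c t)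
      = (\<Sum>t<T. loss (y t) (yhat d y ex t) - abst d y ex t * (1/2 - c t))"
    using expected_loss_eq by simp
  also have "\<dots> \<le> (\<Sum>t<T. loss (y t) (yhat d y ex t) - abst d y ex t * (1/2 - cmax))"
    using assms abst_nonneg by (intro sum_mono diff_left_mono mult_left_mono) auto
  finally show ?thesis
    by (simp add: sum_subtractf mult.commute[of "1/2 - cmax"] flip: sum_distrib_right)
qed

end

lemma le_min_of_abstention_saving:
  fixes A H L a V B c R :: real
  assumes saving: "A \<le> H - (1/2 - c) * B" and regret: "H \<le> L + 2 * sqrt (a * V) + R"
    and "V \<le> B / 2" and "0 \<le> B" and "c < 1/2" and "0 \<le> a"
  shows "A \<le> L + min (a / (1 - 2 * c)) (2 * sqrt (a * V)) + R"
proof -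
  have "a * V \<le> a * (B / 2)"
    using assms by (intro mult_left_mono) auto
  then have "2 * sqrt (a * V) \<le> 2 * sqrt (a * (B / 2))"
    by simp
  also have "\<dots> \<le> a / (1 - 2 * c) + (1 - 2 * c) * (B / 2)"
    using two_sqrt_mult_le[of a "B / 2" "1 - 2 * c"] assms by simp
  finally have "2 * sqrt (a * V) \<le> a / (1 - 2 * c) + (1/2 - c) * B"
    by (simp add: algebra_simps)
  moreover have "0 \<le> (1/2 - c) * B"
    using assms by simp
  ultimately show ?thesis
    using saving regret by (simp add: min_def)
qed

theorem mainTheorem10:
  fixes d T i :: nat and y :: "nat \<Rightarrow> real" and ex :: "nat \<Rightarrow> nat \<Rightarrow> real" and c :: "nat \<Rightarrow> real"
  assumes "\<forall>t<T. y t \<in> {-1, 1}"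
    and "\<forall>t<T. \<forall>j<d. ex t j \<in> {-1..1}"
    and "\<forall>t<T. 0 \<le> c t"
    and "0 < T"
    and "Max (c ` {..<T}) < 1/2"
    and "i < d"
  shows "(\<Sum>t<T. (1 - abst d y ex t) * loss (y t) (ystar d y ex t) + abst d y ex t * c t)
    \<le> (\<Sum>t<T. loss (y t) (ex t i))
       + min (ln (real d) / (1 - 2 * Max (c ` {..<T}))) (2 * sqrt (ln (real d) * (\<Sum>t<T. vt d y ex t)))
       + 4/3 * ln (real d) + 2"
proof -
  interpret adahedge_run d T y ex
    using assms(1,2,6) by unfold_locales auto
  have "\<forall>t<T. c t \<le> Max (c ` {..<T})"
    by simp
  note saving = abstention_loss_le[OF this]
  have "(\<Sum>t<T. vt d y ex t) \<le> (\<Sum>t<T. abst d y ex t) / 2"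
    unfolding sum_divide_distrib using vt_le_half_abst by (intro sum_mono) blast
  moreover have "0 \<le> (\<Sum>t<T. abst d y ex t)"
    using abst_nonneg by (intro sum_nonneg) blast
  moreover have "0 \<le> ln (real d)"
    using assms(6) by simp
  ultimately show ?thesis
    using le_min_of_abstention_saving[OF saving, where R = "4/3 * ln (real d) + 2"]
      regret_le[OF assms(6)] assms(5)
    by (simp add: add.assoc)
qed

end
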